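(* Let $T \ge 2$ and let $R_0, \ldots, R_{T-1}$ be real matrices with $R_t \in \mathbb R^{q_t \times n}$, such that the row space of $R_t$ contains the row space of $R_{t+1}$ for $t = 0, \ldots, T-2$. For vectors $\sigma_{t+1|0} \in \mathbb R^{q_{t+1}}$, $t = 0, \ldots, T-2$, define $\sigma_{t|1} := (R_t')^+ R_{t+1}' \sigma_{t+1|0}$ for $t = 0,\ldots,T-2$ and $$\pi_6 := \frac14 \sum_{t=0}^{T-2} \big(|\sigma_{t+1|0}|^2 - |\sigma_{t|1}|^2\big).$$ Then $\pi_6 \ge 0$ for all $\sigma_{1|0}, \ldots, \sigma_{T-1|0}$ if and only if $\|R_{t+1} R_t^+\| \le 1$ for $t = 0, \ldots, T-2$.
   Context: For a matrix $M$, $M'$ is its transpose, $M^+$ its Moore–Penrose pseudoinverse, and $\|M\|$ its maximum singular value. $|\cdot|$ is the Euclidean norm. *)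

theory Defs
  imports "Jordan_Normal_Form.Matrix"
begin

definition row_space :: "real mat \<Rightarrow> real vec set" where
  "row_space A = {transpose_mat A *\<^sub>v y | y. y \<in> carrier_vec (dim_row A)}"

definition pinv :: "real mat \<Rightarrow> real mat" where
  "pinv A = (THE X. X \<in> carrier_mat (dim_col A) (dim_row A) \<and>
                   A * X * A = A \<and> X * A * X = X \<and>
                   transpose_mat (A * X) = A * X \<and> transpose_mat (X * A) = X * A)"

definition vnorm :: "real vec \<Rightarrow> real" where
  "vnorm v = sqrt (v \<bullet> v)"

definition spec_norm :: "real mat \<Rightarrow> real" where
  "spec_norm A = Sup {vnorm (A *\<^sub>v v) | v. v \<in> carrier_vec (dim_col A) \<and> vnorm v \<le> 1}"

end

(*
  Since the pseudoinverse commutes with transposition, sigma_{t|1} = M_t' sigma_{t+1|0} for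
  M_t = R_{t+1} R_t^+. Hence 4 pi_6 is a sum of terms |s|^2 - |M_t' s|^2 in independent variables
  s = sigma_{t+1|0}; it is nonnegative for all choices iff every term is (set the other variables
  to 0), i.e. iff every M_t' is a contraction. By Cauchy-Schwarz, |M' s|^2 = <s, M M' s> shows that
  M' is a contraction iff M is, i.e. iff ||M_t|| <= 1.

  As the pseudoinverse is defined by the Penrose equations, it must be shown to exist: an
  orthogonal projection P = A Z onto the column space of A is built one column at a time by
  rank-one updates, and with the projection Q = W A onto the row space, X = Q Z P satisfies the
  four equations.
*)

theory Submission
  imports Defs
begin

section \<open>Euclidean norm and spectral norm\<close>

lemma scalar_prod_self_nonneg: "0 \<le> (v :: real vec) \<bullet> v"
  unfolding scalar_prod_def by (auto intro: sum_nonneg)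

lemma scalar_prod_self_eq_0_iff:
  fixes v :: "real vec"
  assumes "v \<in> carrier_vec n"
  shows "v \<bullet> v = 0 \<longleftrightarrow> v = 0\<^sub>v n"
proof
  assume "v \<bullet> v = 0"
  then have "\<forall>i\<in>{0..<n}. v $ i * v $ i = 0"
    using assms unfolding scalar_prod_def by (subst sum_nonneg_eq_0_iff[symmetric]) auto
  then show "v = 0\<^sub>v n"
    using assms by (intro eq_vecI) auto
qed simp

lemma vnorm_nonneg: "0 \<le> vnorm v"
  unfolding vnorm_def using scalar_prod_self_nonneg by simp

lemma vnorm_power2: "(vnorm v)\<^sup>2 = v \<bullet> v"
  unfolding vnorm_def using scalar_prod_self_nonneg by simp

lemma vnorm_eq_0_iff: "v \<in> carrier_vec n \<Longrightarrow> vnorm v = 0 \<longleftrightarrow> v = 0\<^sub>v n"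
  unfolding vnorm_def using scalar_prod_self_eq_0_iff by simp

lemma vnorm_zero_vec [simp]: "vnorm (0\<^sub>v n) = 0"
  unfolding vnorm_def by simp

lemma vnorm_smult: "vnorm (c \<cdot>\<^sub>v v) = \<bar>c\<bar> * vnorm v"
proof -
  have "(c \<cdot>\<^sub>v v) \<bullet> (c \<cdot>\<^sub>v v) = c\<^sup>2 * (v \<bullet> v)"
    unfolding scalar_prod_def by (simp add: sum_distrib_left power2_eq_square mult_ac)
  then show ?thesis unfolding vnorm_def by (simp add: real_sqrt_mult)
qed

lemma scalar_prod_le_vnorm_mult:
  fixes x y :: "real vec"
  assumes "dim_vec x = dim_vec y"
  shows "x \<bullet> y \<le> vnorm x * vnorm y"
proof -
  define n A B where "n = dim_vec y" and "A = vnorm x" and "B = vnorm y"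
  have x: "x \<in> carrier_vec n" and y: "y \<in> carrier_vec n"
    using assms unfolding n_def by (auto intro: carrier_vecI)
  have "0 \<le> (\<Sum>i<n. (B * x $ i - A * y $ i)\<^sup>2)"
    by (simp add: sum_nonneg)
  also have "\<dots> = B\<^sup>2 * (x \<bullet> x) - 2 * A * B * (x \<bullet> y) + A\<^sup>2 * (y \<bullet> y)"
    using x y unfolding scalar_prod_def
    by (simp add: power2_eq_square algebra_simps sum_distrib_left sum.distrib sum_subtractf atLeast0LessThan)
  also have "\<dots> = 2 * (A * B) * (A * B - x \<bullet> y)"
    unfolding A_def B_def vnorm_power2[symmetric] by (simp add: power2_eq_square algebra_simps)
  finally have "0 \<le> A * B * (A * B - x \<bullet> y)"
    by simp
  moreover have "x \<bullet> y = 0" if "A * B = 0"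
  proof -
    have "x = 0\<^sub>v n \<or> y = 0\<^sub>v n"
      using that x y vnorm_eq_0_iff unfolding A_def B_def by auto
    then show ?thesis
      using x y by auto
  qed
  moreover have "0 \<le> A * B"
    unfolding A_def B_def by (simp add: vnorm_nonneg)
  ultimately show ?thesis
    unfolding A_def[symmetric] B_def[symmetric] by (cases "A * B = 0") (auto simp: zero_le_mult_iff)
qed

lemma abs_scalar_prod_le_vnorm_mult:
  fixes x y :: "real vec"
  assumes "dim_vec x = dim_vec y"
  shows "\<bar>x \<bullet> y\<bar> \<le> vnorm x * vnorm y"
proof -
  have "((- 1) \<cdot>\<^sub>v x) \<bullet> y = - (x \<bullet> y)"
    using assms unfolding scalar_prod_def by (simp add: sum_negf)
  then show ?thesis
    using scalar_prod_le_vnorm_mult[of x y] scalar_prod_le_vnorm_mult[of "(- 1) \<cdot>\<^sub>v x" y] assms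
    by (simp add: vnorm_smult)
qed

lemma mult_mat_vec_zero_vec: "A \<in> carrier_mat m n \<Longrightarrow> A *\<^sub>v 0\<^sub>v n = 0\<^sub>v m"
  by (intro eq_vecI) auto

definition contraction :: "real mat \<Rightarrow> bool" where
  "contraction M \<longleftrightarrow> (\<forall>v \<in> carrier_vec (dim_col M). vnorm (M *\<^sub>v v) \<le> vnorm v)"

lemma vnorm_mult_mat_vec_le:
  fixes M :: "real mat"
  assumes v: "v \<in> carrier_vec (dim_col M)"
  shows "vnorm (M *\<^sub>v v) \<le> sqrt (\<Sum>i<dim_row M. row M i \<bullet> row M i) * vnorm v"
proof -
  have "(vnorm (M *\<^sub>v v))\<^sup>2 = (\<Sum>i<dim_row M. (row M i \<bullet> v)\<^sup>2)"
    unfolding vnorm_power2 scalar_prod_def[of "M *\<^sub>v v"]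
    by (simp add: power2_eq_square atLeast0LessThan)
  also have "\<dots> \<le> (\<Sum>i<dim_row M. (vnorm (row M i) * vnorm v)\<^sup>2)"
    using abs_scalar_prod_le_vnorm_mult v
    by (intro sum_mono power2_le_iff_abs_le[THEN iffD2]) (auto intro: mult_nonneg_nonneg vnorm_nonneg)
  also have "\<dots> = (sqrt (\<Sum>i<dim_row M. row M i \<bullet> row M i) * vnorm v)\<^sup>2"
    by (simp add: power_mult_distrib vnorm_power2 sum_distrib_right sum_nonneg scalar_prod_self_nonneg)
  finally show ?thesis
    by (rule power2_le_imp_le) (simp add: vnorm_nonneg sum_nonneg scalar_prod_self_nonneg)
qed

lemma spec_norm_le_1_iff_unit_ball:
  "spec_norm M \<le> 1 \<longleftrightarrow> (\<forall>v \<in> carrier_vec (dim_col M). vnorm v \<le> 1 \<longrightarrow> vnorm (M *\<^sub>v v) \<le> 1)"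
proof -
  define S where "S = {vnorm (M *\<^sub>v v) | v. v \<in> carrier_vec (dim_col M) \<and> vnorm v \<le> 1}"
  define K where "K = sqrt (\<Sum>i<dim_row M. row M i \<bullet> row M i)"
  have "0 \<le> K"
    unfolding K_def by (simp add: sum_nonneg scalar_prod_self_nonneg)
  \<comment> \<open>\<open>Sup\<close> of a set of reals that is not bounded above is unspecified\<close>
  have "vnorm (M *\<^sub>v v) \<le> K" if "v \<in> carrier_vec (dim_col M)" "vnorm v \<le> 1" for v
    using vnorm_mult_mat_vec_le[OF that(1)] mult_left_le[OF that(2) \<open>0 \<le> K\<close>]
    unfolding K_def by linarith
  then have "bdd_above S"
    unfolding S_def by (intro bdd_aboveI[of _ K]) auto
  moreover have "S \<noteq> {}"
    unfolding S_def using zero_carrier_vec vnorm_zero_vec by fastforce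
  ultimately show ?thesis
    using cSup_le_iff[of S 1] unfolding spec_norm_def S_def by blast
qed

lemma contraction_iff_unit_ball:
  "contraction M \<longleftrightarrow> (\<forall>v \<in> carrier_vec (dim_col M). vnorm v \<le> 1 \<longrightarrow> vnorm (M *\<^sub>v v) \<le> 1)"
proof
  assume unit: "\<forall>v \<in> carrier_vec (dim_col M). vnorm v \<le> 1 \<longrightarrow> vnorm (M *\<^sub>v v) \<le> 1"
  show "contraction M"
    unfolding contraction_def
  proof
    fix v :: "real vec"
    assume v: "v \<in> carrier_vec (dim_col M)"
    show "vnorm (M *\<^sub>v v) \<le> vnorm v"
    proof (cases "vnorm v = 0")
      case True
      then have "v = 0\<^sub>v (dim_col M)"
        using v vnorm_eq_0_iff by blast
      then show ?thesis
        using True mult_mat_vec_zero_vec[of M "dim_row M" "dim_col M"] by simp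
    next
      case False
      then have pos: "0 < vnorm v"
        using vnorm_nonneg[of v] by simp
      have "vnorm (M *\<^sub>v ((1 / vnorm v) \<cdot>\<^sub>v v)) \<le> 1"
        using unit v pos by (simp add: vnorm_smult)
      then show ?thesis
        using v pos by (simp add: mult_mat_vec[of M "dim_row M" "dim_col M"] vnorm_smult divide_le_eq)
    qed
  qed
qed (auto simp: contraction_def)

lemma spec_norm_le_1_iff_contraction: "spec_norm M \<le> 1 \<longleftrightarrow> contraction M"
  unfolding spec_norm_le_1_iff_unit_ball contraction_iff_unit_ball ..

lemma contraction_transposeI:
  assumes "contraction M"
  shows "contraction (transpose_mat M)"
  unfolding contraction_def
proof
  fix s :: "real vec"
  assume s: "s \<in> carrier_vec (dim_col (transpose_mat M))"
  define w where "w = transpose_mat M *\<^sub>v s"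
  have w: "w \<in> carrier_vec (dim_col M)"
    unfolding w_def by (intro carrier_vecI) simp
  have "vnorm w * vnorm w = s \<bullet> (M *\<^sub>v w)"
    using transpose_vec_mult_scalar[of M "dim_row M" "dim_col M" w s] s w
    by (simp add: w_def vnorm_power2 flip: power2_eq_square)
  also have "\<dots> \<le> vnorm s * vnorm (M *\<^sub>v w)"
    using s abs_scalar_prod_le_vnorm_mult[of s "M *\<^sub>v w"] by simp
  also have "\<dots> \<le> vnorm s * vnorm w"
    using assms w unfolding contraction_def by (simp add: mult_left_mono vnorm_nonneg)
  finally have "vnorm w * vnorm w \<le> vnorm s * vnorm w" .
  then show "vnorm (transpose_mat M *\<^sub>v s) \<le> vnorm s"
    unfolding w_def[symmetric]
    using vnorm_nonneg[of s] vnorm_nonneg[of w] mult_right_le_imp_le[of "vnorm w" "vnorm w" "vnorm s"]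
    by linarith
qed

lemma contraction_transpose_iff: "contraction (transpose_mat M) \<longleftrightarrow> contraction M"
  using contraction_transposeI[of M] contraction_transposeI[of "transpose_mat M"] by auto

lemma spec_norm_le_1_iff_transpose:
  "spec_norm M \<le> 1 \<longleftrightarrow>
     (\<forall>s \<in> carrier_vec (dim_row M). 0 \<le> (vnorm s)\<^sup>2 - (vnorm (transpose_mat M *\<^sub>v s))\<^sup>2)"
proof -
  have "0 \<le> (vnorm s)\<^sup>2 - (vnorm (transpose_mat M *\<^sub>v s))\<^sup>2 \<longleftrightarrow> vnorm (transpose_mat M *\<^sub>v s) \<le> vnorm s"
    for s
    by (simp add: vnorm_nonneg)
  then show ?thesis
    using contraction_transpose_iff[of M]
    unfolding spec_norm_le_1_iff_contraction contraction_def by simp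
qed

section \<open>The Moore--Penrose pseudoinverse\<close>

definition moore_penrose :: "real mat \<Rightarrow> real mat \<Rightarrow> bool" where
  "moore_penrose A X \<longleftrightarrow> X \<in> carrier_mat (dim_col A) (dim_row A) \<and>
     A * X * A = A \<and> X * A * X = X \<and>
     transpose_mat (A * X) = A * X \<and> transpose_mat (X * A) = X * A"

lemma pinv_eq_The_moore_penrose: "pinv A = (THE X. moore_penrose A X)"
  unfolding pinv_def moore_penrose_def ..

lemma transpose_mult3:
  fixes A B C :: "real mat"
  assumes "A \<in> carrier_mat a b" "B \<in> carrier_mat b c" "C \<in> carrier_mat c d"
  shows "transpose_mat (A * B * C) = transpose_mat C * (transpose_mat B * transpose_mat A)"
  using assms by (simp add: transpose_mult[of A a b "B * C" d] transpose_mult[of B b c C d])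

lemma moore_penrose_transpose:
  assumes "moore_penrose A X"
  shows "moore_penrose (transpose_mat A) (transpose_mat X)"
proof -
  define m n where "m = dim_row A" and "n = dim_col A"
  have A: "A \<in> carrier_mat m n" and X: "X \<in> carrier_mat n m"
    using assms unfolding m_def n_def moore_penrose_def by auto
  have At: "transpose_mat A \<in> carrier_mat n m" and Xt: "transpose_mat X \<in> carrier_mat m n"
    using A X by simp_all
  have "transpose_mat A * transpose_mat X * transpose_mat A = transpose_mat (A * X * A)"
    using transpose_mult3[OF A X A] assoc_mult_mat[OF At Xt At] by simp
  moreover have "transpose_mat X * transpose_mat A * transpose_mat X = transpose_mat (X * A * X)"
    using transpose_mult3[OF X A X] assoc_mult_mat[OF Xt At Xt] by simp
  moreover have "transpose_mat A * transpose_mat X = transpose_mat (X * A)"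
    and "transpose_mat X * transpose_mat A = transpose_mat (A * X)"
    using A X by (simp_all add: transpose_mult)
  ultimately show ?thesis
    using assms X unfolding moore_penrose_def by simp
qed

lemma moore_penrose_mult_eq:
  assumes X: "moore_penrose A X" and Y: "moore_penrose A Y"
  shows "A * X = A * Y" and "X * A = Y * A"
proof -
  define m n where "m = dim_row A" and "n = dim_col A"
  have A: "A \<in> carrier_mat m n" and Xc: "X \<in> carrier_mat n m" and Yc: "Y \<in> carrier_mat n m"
    using X Y unfolding m_def n_def moore_penrose_def by auto
  note XX = X[unfolded moore_penrose_def] and YY = Y[unfolded moore_penrose_def]
  have At: "transpose_mat A \<in> carrier_mat n m" and Xt: "transpose_mat X \<in> carrier_mat m n"
    and Yt: "transpose_mat Y \<in> carrier_mat m n"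
    using A Xc Yc by simp_all
  have tA: "transpose_mat A = transpose_mat A * (transpose_mat Y * transpose_mat A)"
    using transpose_mult3[OF A Yc A] YY by simp
  have AX: "A * X = transpose_mat X * transpose_mat A"
    and AY: "A * Y = transpose_mat Y * transpose_mat A"
    and XA: "X * A = transpose_mat A * transpose_mat X"
    and YA: "Y * A = transpose_mat A * transpose_mat Y"
    using XX YY transpose_mult[OF A Xc] transpose_mult[OF A Yc]
      transpose_mult[OF Xc A] transpose_mult[OF Yc A] by simp_all
  have "A * X = transpose_mat X * (transpose_mat A * (transpose_mat Y * transpose_mat A))"
    using AX tA by simp
  also have "\<dots> = (A * X) * (A * Y)"
    using AX AY assoc_mult_mat[OF Xt At mult_carrier_mat[OF Yt At]] by simp
  also have "\<dots> = A * Y"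
    using assoc_mult_mat[OF mult_carrier_mat[OF A Xc] A Yc] XX by simp
  finally show "A * X = A * Y" .
  have "X * A = (transpose_mat A * (transpose_mat Y * transpose_mat A)) * transpose_mat X"
    using XA tA by simp
  also have "\<dots> = (Y * A) * (X * A)"
    using XA YA assoc_mult_mat[OF At Yt At] assoc_mult_mat[OF mult_carrier_mat[OF At Yt] At Xt] by simp
  also have "\<dots> = Y * A"
    using assoc_mult_mat[OF Yc A mult_carrier_mat[OF Xc A]] assoc_mult_mat[OF A Xc A] XX by simp
  finally show "X * A = Y * A" .
qed

lemma moore_penrose_unique:
  assumes X: "moore_penrose A X" and Y: "moore_penrose A Y"
  shows "X = Y"
proof -
  have A: "A \<in> carrier_mat (dim_row A) (dim_col A)"
    and Xc: "X \<in> carrier_mat (dim_col A) (dim_row A)" and Yc: "Y \<in> carrier_mat (dim_col A) (dim_row A)"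
    using X Y unfolding moore_penrose_def by auto
  have "X = X * (A * X)"
    using X assoc_mult_mat[OF Xc A Xc] unfolding moore_penrose_def by simp
  also have "\<dots> = (Y * A) * Y"
    using moore_penrose_mult_eq[OF X Y] assoc_mult_mat[OF Xc A Yc] by simp
  also have "\<dots> = Y"
    using Y unfolding moore_penrose_def by simp
  finally show ?thesis .
qed

definition outer_prod :: "real vec \<Rightarrow> real vec \<Rightarrow> real mat" where
  "outer_prod u w = mat (dim_vec u) (dim_vec w) (\<lambda>(i, j). u $ i * w $ j)"

lemma outer_prod_carrier [simp]: "outer_prod u w \<in> carrier_mat (dim_vec u) (dim_vec w)"
  unfolding outer_prod_def by simp

lemma mult_outer_prod:
  assumes "A \<in> carrier_mat k (dim_vec u)"
  shows "A * outer_prod u w = outer_prod (A *\<^sub>v u) w"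
  using assms unfolding outer_prod_def
  by (intro eq_matI) (auto simp: scalar_prod_def sum_distrib_left mult_ac)

lemma eq_mat_by_mult_vec:
  fixes A B :: "real mat"
  assumes "A \<in> carrier_mat m n" "B \<in> carrier_mat m n"
    and "\<And>v. v \<in> carrier_vec n \<Longrightarrow> A *\<^sub>v v = B *\<^sub>v v"
  shows "A = B"
proof (rule eq_matI)
  fix i j
  assume ij: "i < dim_row B" "j < dim_col B"
  have "A $$ (i, j) = (A *\<^sub>v unit_vec n j) $ i"
    using assms(1,2) ij by simp
  also have "\<dots> = (B *\<^sub>v unit_vec n j) $ i"
    using assms(3) by simp
  also have "\<dots> = B $$ (i, j)"
    using assms(2) ij by simp
  finally show "A $$ (i, j) = B $$ (i, j)" .
qed (use assms in auto)

lemma add_smult_outer_prod_mult_vec: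
  fixes P :: "real mat"
  assumes "P \<in> carrier_mat m m" and "c \<in> carrier_vec m" and "v \<in> carrier_vec m"
  shows "(P + k \<cdot>\<^sub>m outer_prod c c) *\<^sub>v v = P *\<^sub>v v + (k * (c \<bullet> v)) \<cdot>\<^sub>v c"
proof -
  have "(k \<cdot>\<^sub>m outer_prod c c) *\<^sub>v v = (k * (c \<bullet> v)) \<cdot>\<^sub>v c"
    using assms(2,3) unfolding outer_prod_def
    by (intro eq_vecI) (auto simp: scalar_prod_def sum_distrib_left mult_ac)
  then show ?thesis
    using assms outer_prod_carrier[of c c] by (simp add: add_mult_distrib_mat_vec[of _ m m])
qed

lemma transpose_smult_outer_prod_self: "transpose_mat (k \<cdot>\<^sub>m outer_prod c c) = k \<cdot>\<^sub>m outer_prod c c"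
  unfolding outer_prod_def by (intro eq_matI) auto

definition orth_proj :: "nat \<Rightarrow> real mat \<Rightarrow> bool" where
  "orth_proj m P \<longleftrightarrow> P \<in> carrier_mat m m \<and> transpose_mat P = P \<and> P * P = P"

lemma orth_proj_kernel_orth_range:
  assumes "orth_proj m P" and "c \<in> carrier_vec m" and "P *\<^sub>v c = 0\<^sub>v m" and "v \<in> carrier_vec m"
  shows "c \<bullet> (P *\<^sub>v v) = 0"
  using assms transpose_vec_mult_scalar[of P m m v c] unfolding orth_proj_def by simp

lemma orth_proj_rank_one_update:
  fixes P :: "real mat" and c :: "real vec"
  assumes P: "orth_proj m P" and c: "c \<in> carrier_vec m" "c \<noteq> 0\<^sub>v m" and Pc: "P *\<^sub>v c = 0\<^sub>v m"
  defines "P' \<equiv> P + (1 / (c \<bullet> c)) \<cdot>\<^sub>m outer_prod c c"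
  shows "orth_proj m P'" and "P' *\<^sub>v c = c"
    and "\<And>v. v \<in> carrier_vec m \<Longrightarrow> P *\<^sub>v v = v \<Longrightarrow> P' *\<^sub>v v = v"
proof -
  have Pm: "P \<in> carrier_mat m m" and sym: "transpose_mat P = P" and idem: "P * P = P"
    using P unfolding orth_proj_def by auto
  have P': "P' \<in> carrier_mat m m"
    unfolding P'_def using Pm outer_prod_carrier[of c c] carrier_vecD[OF c(1)] by simp
  have "0 < c \<bullet> c"
    using c scalar_prod_self_eq_0_iff[of c m] scalar_prod_self_nonneg[of c] by linarith
  have P'_mult: "P' *\<^sub>v v = P *\<^sub>v v + ((c \<bullet> v) / (c \<bullet> c)) \<cdot>\<^sub>v c" if "v \<in> carrier_vec m" for v
    unfolding P'_def using add_smult_outer_prod_mult_vec[OF Pm c(1) that] by simp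
  show P'c: "P' *\<^sub>v c = c"
    using P'_mult[OF c(1)] \<open>0 < c \<bullet> c\<close> Pc c by simp
  show P'_fixes: "P' *\<^sub>v v = v" if "v \<in> carrier_vec m" "P *\<^sub>v v = v" for v
  proof -
    have "c \<bullet> v = 0"
      using orth_proj_kernel_orth_range[OF P c(1) Pc that(1)] that(2) by simp
    moreover have "(0 :: real) \<cdot>\<^sub>v c = 0\<^sub>v m"
      using c(1) by (intro eq_vecI) auto
    ultimately show ?thesis
      using P'_mult[OF that(1)] that by simp
  qed
  have "transpose_mat P' = P'"
    unfolding P'_def using Pm outer_prod_carrier[of c c] carrier_vecD[OF c(1)] sym
    by (simp add: transpose_add transpose_smult_outer_prod_self)
  moreover have "P' * P' = P'"
  proof (rule eq_mat_by_mult_vec)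
    fix v :: "real vec"
    assume v: "v \<in> carrier_vec m"
    define t where "t = (c \<bullet> v) / (c \<bullet> c)"
    have "P *\<^sub>v (P *\<^sub>v v) = P *\<^sub>v v"
      using idem Pm v by (metis assoc_mult_mat_vec)
    then have "P' *\<^sub>v (P *\<^sub>v v) = P *\<^sub>v v"
      using P'_fixes Pm v by simp
    then have "P' *\<^sub>v (P *\<^sub>v v + t \<cdot>\<^sub>v c) = P *\<^sub>v v + t \<cdot>\<^sub>v c"
      using P' Pm v c P'c by (simp add: mult_add_distrib_mat_vec[of P' m m] mult_mat_vec[of P' m m])
    then show "(P' * P') *\<^sub>v v = P' *\<^sub>v v"
      using P' v by (simp add: P'_mult[OF v] t_def)
  qed (use P' in simp_all)
  ultimately show "orth_proj m P'"
    unfolding orth_proj_def using P' by simp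
qed

lemma orth_proj_extend:
  fixes A :: "real mat"
  assumes A: "A \<in> carrier_mat m n" and P: "orth_proj m P" and Z: "Z \<in> carrier_mat n m"
    and PAZ: "P = A * Z" and x: "x \<in> carrier_vec n"
  obtains P' Z' where "orth_proj m P'" "Z' \<in> carrier_mat n m" "P' = A * Z'"
    "P' *\<^sub>v (A *\<^sub>v x) = A *\<^sub>v x" "\<And>v. v \<in> carrier_vec m \<Longrightarrow> P *\<^sub>v v = v \<Longrightarrow> P' *\<^sub>v v = v"
proof -
  have Pm: "P \<in> carrier_mat m m" and idem: "P * P = P"
    using P unfolding orth_proj_def by auto
  define a where "a = A *\<^sub>v x"
  define c where "c = a - P *\<^sub>v a"
  have a: "a \<in> carrier_vec m" and c: "c \<in> carrier_vec m"
    using A Pm x by (simp_all add: a_def c_def)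
  have PPa: "P *\<^sub>v (P *\<^sub>v a) = P *\<^sub>v a"
    using idem Pm a by (metis assoc_mult_mat_vec)
  have a_split: "a = P *\<^sub>v a + c"
    using a Pm unfolding c_def by (intro eq_vecI) auto
  show thesis
  proof (cases "c = 0\<^sub>v m")
    case True
    then show thesis
      using that[OF P Z PAZ] a_split a Pm unfolding a_def by simp
  next
    case False
    have Pc: "P *\<^sub>v c = 0\<^sub>v m"
      using Pm a PPa unfolding c_def by (simp add: mult_minus_distrib_mat_vec[OF Pm])
    define P' where "P' = P + (1 / (c \<bullet> c)) \<cdot>\<^sub>m outer_prod c c"
    note P' = orth_proj_rank_one_update[OF P c False Pc, folded P'_def]
    \<comment> \<open>\<open>P' = A Z'\<close> needs \<open>c\<close> in the column space of \<open>A\<close>: \<open>c = A u\<close>\<close>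
    define u where "u = x - Z *\<^sub>v a"
    have u: "u \<in> carrier_vec n"
      using Z x a by (simp add: u_def)
    have Au: "A *\<^sub>v u = c"
      using A Z a x PAZ unfolding u_def c_def by (simp add: mult_minus_distrib_mat_vec[OF A] a_def)
    have uc: "outer_prod u c \<in> carrier_mat n m"
      using outer_prod_carrier[of u c] carrier_vecD[OF u] carrier_vecD[OF c] by simp
    define Z' where "Z' = Z + (1 / (c \<bullet> c)) \<cdot>\<^sub>m outer_prod u c"
    have "Z' \<in> carrier_mat n m"
      using Z uc unfolding Z'_def by simp
    moreover have "P' = A * Z'"
      using A Z uc Au PAZ carrier_vecD[OF u] unfolding Z'_def P'_def
      by (simp add: mult_add_distrib_mat[of A m n] mult_smult_distrib[of A m n] mult_outer_prod)
    moreover have "P' *\<^sub>v a = a"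
      using a_split P'(2) P'(3)[of "P *\<^sub>v a"] PPa Pm a c
      by (metis mult_add_distrib_mat_vec mult_mat_vec_carrier orth_proj_def P'(1))
    ultimately show thesis
      using that[OF P'(1)] P'(3) unfolding a_def by blast
  qed
qed

lemma orth_proj_fixing_cols_exists:
  fixes A :: "real mat"
  assumes A: "A \<in> carrier_mat m n" and "k \<le> n"
  shows "\<exists>P Z. orth_proj m P \<and> Z \<in> carrier_mat n m \<and> P = A * Z \<and> (\<forall>j<k. P *\<^sub>v col A j = col A j)"
  using \<open>k \<le> n\<close>
proof (induction k)
  case 0
  have "orth_proj m (0\<^sub>m m m)"
    unfolding orth_proj_def by (auto intro!: eq_matI)
  moreover have "0\<^sub>m m m = A * 0\<^sub>m n m"
    using A by (auto intro!: eq_matI)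
  ultimately show ?case
    using zero_carrier_mat[of n m] by blast
next
  case (Suc k)
  then obtain P Z where P: "orth_proj m P" and Z: "Z \<in> carrier_mat n m" and PAZ: "P = A * Z"
    and fixes_cols: "\<forall>j<k. P *\<^sub>v col A j = col A j"
    by auto
  have "A *\<^sub>v unit_vec n k = col A k"
    using A Suc.prems by (intro eq_vecI) auto
  then obtain P' Z' where "orth_proj m P'" "Z' \<in> carrier_mat n m" "P' = A * Z'"
    and "P' *\<^sub>v col A k = col A k" and "\<And>v. v \<in> carrier_vec m \<Longrightarrow> P *\<^sub>v v = v \<Longrightarrow> P' *\<^sub>v v = v"
    using orth_proj_extend[OF A P Z PAZ unit_vec_carrier[of n k]] by metis
  moreover have "col A j \<in> carrier_vec m" if "j < Suc k" for j
    using A Suc.prems that col_carrier_vec[of j n A m] by simp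
  ultimately show ?case
    using fixes_cols by (metis less_Suc_eq)
qed

lemma orth_proj_onto_col_space_exists:
  fixes A :: "real mat"
  assumes A: "A \<in> carrier_mat m n"
  obtains P Z where "orth_proj m P" "Z \<in> carrier_mat n m" "P = A * Z" "P * A = A"
proof -
  obtain P Z where P: "orth_proj m P" and Z: "Z \<in> carrier_mat n m" and PAZ: "P = A * Z"
    and fixes_cols: "\<forall>j<n. P *\<^sub>v col A j = col A j"
    using orth_proj_fixing_cols_exists[OF A order.refl] by blast
  have "P * A = A"
  proof (rule eq_matI)
    fix i j
    assume "i < dim_row A" "j < dim_col A"
    then show "(P * A) $$ (i, j) = A $$ (i, j)"
      using fixes_cols P A unfolding orth_proj_def
      by (metis carrier_matD index_col index_mult_mat(1) index_mult_mat_vec)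
  qed (use P A in \<open>auto simp: orth_proj_def\<close>)
  then show thesis
    using that P Z PAZ by blast
qed

lemma moore_penrose_of_orth_projs:
  fixes A :: "real mat"
  assumes A: "A \<in> carrier_mat m n"
    and P: "orth_proj m P" and Z: "Z \<in> carrier_mat n m" and PAZ: "P = A * Z" and PA: "P * A = A"
    and Q: "orth_proj n Q" and W: "W \<in> carrier_mat n m" and QWA: "Q = W * A" and AQ: "A * Q = A"
  shows "moore_penrose A (Q * (Z * P))"
proof -
  have Pm: "P \<in> carrier_mat m m" and Ps: "transpose_mat P = P" and Pi: "P * P = P"
    and Qm: "Q \<in> carrier_mat n n" and Qs: "transpose_mat Q = Q" and Qi: "Q * Q = Q"
    using P Q unfolding orth_proj_def by auto
  define X where "X = Q * (Z * P)"
  have X: "X \<in> carrier_mat n m"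
    using Qm Z Pm by (simp add: X_def)
  have "A * X = (A * Q) * (Z * P)"
    using assoc_mult_mat[OF A Qm mult_carrier_mat[OF Z Pm]] by (simp add: X_def)
  also have "\<dots> = P"
    using AQ assoc_mult_mat[OF A Z Pm] PAZ Pi by simp
  finally have AX: "A * X = P" .
  have "X * A = Q * (Z * A)"
    using assoc_mult_mat[OF Qm mult_carrier_mat[OF Z Pm] A] assoc_mult_mat[OF Z Pm A] PA
    by (simp add: X_def)
  also have "\<dots> = W * ((A * Z) * A)"
    using QWA assoc_mult_mat[OF W A mult_carrier_mat[OF Z A]] assoc_mult_mat[OF A Z A] by simp
  also have "\<dots> = Q"
    using PAZ PA QWA by simp
  finally have XA: "X * A = Q" .
  have "X * A * X = (Q * Q) * (Z * P)"
    using XA assoc_mult_mat[OF Qm Qm mult_carrier_mat[OF Z Pm]] by (simp add: X_def)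
  then show ?thesis
    unfolding moore_penrose_def X_def[symmetric] using X A AX XA PA Ps Qs Qi
    by (simp add: X_def)
qed

lemma moore_penrose_exists:
  fixes A :: "real mat"
  assumes A: "A \<in> carrier_mat m n"
  shows "\<exists>X. moore_penrose A X"
proof -
  have At: "transpose_mat A \<in> carrier_mat n m"
    using A by simp
  obtain P Z where P: "orth_proj m P" "Z \<in> carrier_mat n m" "P = A * Z" "P * A = A"
    using orth_proj_onto_col_space_exists[OF A] .
  obtain Q W where Q: "orth_proj n Q" and W: "W \<in> carrier_mat m n"
    and QAW: "Q = transpose_mat A * W" and QA: "Q * transpose_mat A = transpose_mat A"
    using orth_proj_onto_col_space_exists[OF At] .
  have Qm: "Q \<in> carrier_mat n n" and Qs: "transpose_mat Q = Q"
    using Q unfolding orth_proj_def by auto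
  have "Q = transpose_mat W * A"
    using transpose_mult[OF At W] QAW Qs by simp
  moreover have "A * Q = A"
    using transpose_mult[OF Qm At] Qs QA by simp
  ultimately show ?thesis
    using moore_penrose_of_orth_projs[OF A P Q, of "transpose_mat W"] W by auto
qed

lemma pinv_moore_penrose: "moore_penrose A (pinv A)"
proof -
  obtain X where "moore_penrose A X"
    using moore_penrose_exists[of A "dim_row A" "dim_col A"] by auto
  then have "\<exists>!X. moore_penrose A X"
    using moore_penrose_unique by blast
  then show ?thesis
    unfolding pinv_eq_The_moore_penrose by (rule theI')
qed

lemma pinv_carrier: "pinv A \<in> carrier_mat (dim_col A) (dim_row A)"
  using pinv_moore_penrose[of A] unfolding moore_penrose_def by simp

lemma pinv_transpose: "pinv (transpose_mat A) = transpose_mat (pinv A)"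
  using moore_penrose_unique[OF pinv_moore_penrose moore_penrose_transpose[OF pinv_moore_penrose]] .

lemma pinv_transpose_mult_transpose:
  assumes "A \<in> carrier_mat m n" and "B \<in> carrier_mat k n"
  shows "pinv (transpose_mat A) * transpose_mat B = transpose_mat (B * pinv A)"
  using assms pinv_carrier[of A] by (simp add: pinv_transpose transpose_mult)

section \<open>Sums of norm defects\<close>

lemma all_choices_sum_nonneg_iff:
  fixes f :: "nat \<Rightarrow> 'a \<Rightarrow> real"
  assumes "\<And>t. t < N \<Longrightarrow> z t \<in> C t" and "\<And>t. t < N \<Longrightarrow> f t (z t) = 0"
  shows "(\<forall>\<sigma>. (\<forall>t<N. \<sigma> t \<in> C t) \<longrightarrow> 0 \<le> (\<Sum>t<N. f t (\<sigma> t))) \<longleftrightarrow> (\<forall>t<N. \<forall>s\<in>C t. 0 \<le> f t s)"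
proof
  assume all: "\<forall>\<sigma>. (\<forall>t<N. \<sigma> t \<in> C t) \<longrightarrow> 0 \<le> (\<Sum>t<N. f t (\<sigma> t))"
  show "\<forall>t<N. \<forall>s\<in>C t. 0 \<le> f t s"
  proof (intro allI impI ballI)
    fix t0 s
    assume "t0 < N" "s \<in> C t0"
    then have "0 \<le> (\<Sum>t<N. f t ((z(t0 := s)) t))"
      using all assms(1) by simp
    also have "(\<Sum>t<N. f t ((z(t0 := s)) t)) = (\<Sum>t<N. if t = t0 then f t0 s else 0)"
      using assms(2) by (intro sum.cong) auto
    finally show "0 \<le> f t0 s"
      using \<open>t0 < N\<close> by simp
  qed
qed (auto intro: sum_nonneg)

lemma all_Suc_shift_iff: "(\<forall>\<sigma> :: nat \<Rightarrow> 'a. P (\<lambda>t. \<sigma> (Suc t))) \<longleftrightarrow> (\<forall>\<sigma>. P \<sigma>)"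
proof (intro iffI allI)
  fix \<rho> :: "nat \<Rightarrow> 'a"
  assume "\<forall>\<sigma>. P (\<lambda>t. \<sigma> (Suc t))"
  then have "P (\<lambda>t. (\<lambda>k. \<rho> (k - 1)) (Suc t))"
    by (rule spec)
  then show "P \<rho>"
    by simp
qed simp

lemma sum_norm_defects_nonneg_iff:
  fixes M :: "nat \<Rightarrow> real mat"
  assumes "\<And>t. t < N \<Longrightarrow> M t \<in> carrier_mat (k t) (l t)"
  shows "(\<forall>\<sigma>. (\<forall>t<N. \<sigma> t \<in> carrier_vec (k t)) \<longrightarrow>
            0 \<le> (\<Sum>t<N. (vnorm (\<sigma> t))\<^sup>2 - (vnorm (transpose_mat (M t) *\<^sub>v \<sigma> t))\<^sup>2))
         \<longleftrightarrow> (\<forall>t<N. spec_norm (M t) \<le> 1)"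
proof -
  have "dim_row (M t) = k t"
    and "(vnorm (0\<^sub>v (k t)))\<^sup>2 - (vnorm (transpose_mat (M t) *\<^sub>v 0\<^sub>v (k t)))\<^sup>2 = 0"
    if "t < N" for t
    using assms[OF that] mult_mat_vec_zero_vec[of "transpose_mat (M t)"] by simp_all
  then show ?thesis
    using all_choices_sum_nonneg_iff[of N "\<lambda>t. 0\<^sub>v (k t)" "\<lambda>t. carrier_vec (k t)"
        "\<lambda>t s. (vnorm s)\<^sup>2 - (vnorm (transpose_mat (M t) *\<^sub>v s))\<^sup>2"]
    by (simp add: spec_norm_le_1_iff_transpose)
qed

theorem proposition3:
  fixes T n :: nat and q :: "nat \<Rightarrow> nat" and R :: "nat \<Rightarrow> real mat"
  assumes "T \<ge> 2"
    and "\<And>t. t < T \<Longrightarrow> R t \<in> carrier_mat (q t) n"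
    and "\<And>t. t + 2 \<le> T \<Longrightarrow> row_space (R (t + 1)) \<subseteq> row_space (R t)"
  shows "(\<forall>\<sigma> :: nat \<Rightarrow> real vec.
            (\<forall>t. t + 2 \<le> T \<longrightarrow> \<sigma> (t + 1) \<in> carrier_vec (q (t + 1))) \<longrightarrow>
            0 \<le> 1 / 4 * (\<Sum>t < T - 1.
                 (vnorm (\<sigma> (t + 1)))\<^sup>2
                 - (vnorm (pinv (transpose_mat (R t)) * transpose_mat (R (t + 1)) *\<^sub>v \<sigma> (t + 1)))\<^sup>2))
         \<longleftrightarrow> (\<forall>t. t + 2 \<le> T \<longrightarrow> spec_norm (R (t + 1) * pinv (R t)) \<le> 1)"
proof -
  define M where "M t = R (t + 1) * pinv (R t)" for t
  have R: "R t \<in> carrier_mat (q t) n" "R (t + 1) \<in> carrier_mat (q (t + 1)) n" if "t < T - 1" for t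
    using assms(2) that by simp_all
  have M: "M t \<in> carrier_mat (q (t + 1)) (q t)" if "t < T - 1" for t
    using R[OF that] pinv_carrier[of "R t"] by (simp add: M_def)
  have "pinv (transpose_mat (R t)) * transpose_mat (R (t + 1)) = transpose_mat (M t)" if "t < T - 1" for t
    using R[OF that] by (simp add: M_def pinv_transpose_mult_transpose)
  then have "(\<Sum>t<T - 1. (vnorm (\<sigma> (t + 1)))\<^sup>2
           - (vnorm (pinv (transpose_mat (R t)) * transpose_mat (R (t + 1)) *\<^sub>v \<sigma> (t + 1)))\<^sup>2)
      = (\<Sum>t<T - 1. (vnorm (\<sigma> (Suc t)))\<^sup>2 - (vnorm (transpose_mat (M t) *\<^sub>v \<sigma> (Suc t)))\<^sup>2)" for \<sigma>
    by (intro sum.cong) auto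
  moreover have "t + 2 \<le> T \<longleftrightarrow> t < T - 1" for t
    by arith
  ultimately show ?thesis
    using all_Suc_shift_iff[where P = "\<lambda>\<sigma>. (\<forall>t<T - 1. \<sigma> t \<in> carrier_vec (q (t + 1))) \<longrightarrow>
        0 \<le> (\<Sum>t<T - 1. (vnorm (\<sigma> t))\<^sup>2 - (vnorm (transpose_mat (M t) *\<^sub>v \<sigma> t))\<^sup>2)"]
      sum_norm_defects_nonneg_iff[of "T - 1" M "\<lambda>t. q (t + 1)" q] M
    unfolding M_def by simp
qed

end
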